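(* Let $k\ge 3$, let $F$ be a field, let $\Phi$ be a subgroup of $F^*$ of order $k$ with generator $\varphi$, and suppose $(F,\Phi)$ is circular. Let $K$ be any extension field of $F$. Then $(K,\Phi)$ is circular (i.e. $|(\Phi a+b)\cap \Phi c|\le 2$ for all $a,b,c\in K^*$), and $\mathcal{O}_\varphi(K,k)=\mathcal{O}_\varphi(F,k)$.
   Context: Notation: $\mathbf{k}=\{1,\dots,k-1\}$, $\mathbf{k}_0=\{0,1,\dots,k-1\}$. For a field $F$ and a subgroup $\Phi\le F^*$ of order $k$, and $a,b\in F$, put $\Phi a+b=\{\lambda a+b:\lambda\in\Phi\}$. The pair $(F,\Phi)$ is called circular if $|(\Phi a+b)\cap\Phi c|\le 2$ for all $a,b,c\in F^*$. Fix a generator $\varphi$ of $\Phi$. A quadruple $(i,j\mid s,t)$ with $i,j,s,t\in\mathbf{k}$ and $i\neq s$ is an overlap (with respect to $\varphi$) if $\frac{\varphi^j-1}{\varphi^i-1}\in\Phi\cdot\frac{\varphi^t-1}{\varphi^s-1}$, equivalently if there is $\omega\in\mathbf{k}_0$ with $\varphi^\omega(\varphi^j-1)(\varphi^s-1)=(\varphi^i-1)(\varphi^t-1)$. The overlap is trivial if at least one of the congruences $i\equiv\pm j$, $j\equiv\pm t$, $t\equiv\pm s$, $s\equiv\pm i \pmod k$ holds, and nontrivial otherwise. $\mathcal{O}_\varphi(F,k)$ denotes the set of all nontrivial overlaps with respect to $\varphi$. *)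

theory Defs
  imports "HOL-Number_Theory.Cong"
begin

definition cyc :: "'a::field \<Rightarrow> 'a set" where
  "cyc phi = {phi ^ n | n. True}"

definition circular :: "'a::field set \<Rightarrow> bool" where
  "circular Phi \<longleftrightarrow>
     (\<forall>a b c. a \<noteq> 0 \<longrightarrow> b \<noteq> 0 \<longrightarrow> c \<noteq> 0 \<longrightarrow>
        card ((\<lambda>l. l * a + b) ` Phi \<inter> (\<lambda>l. l * c) ` Phi) \<le> 2)"

definition is_overlap :: "'a::field \<Rightarrow> nat \<Rightarrow> nat \<times> nat \<times> nat \<times> nat \<Rightarrow> bool" where
  "is_overlap phi k q = (case q of (i, j, s, t) \<Rightarrow>
     i \<in> {1..<k} \<and> j \<in> {1..<k} \<and> s \<in> {1..<k} \<and> t \<in> {1..<k} \<and> i \<noteq> s \<and>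
     (\<exists>w\<in>{0..<k}. phi ^ w * (phi ^ j - 1) * (phi ^ s - 1) = (phi ^ i - 1) * (phi ^ t - 1)))"

definition trivial_overlap :: "nat \<Rightarrow> nat \<times> nat \<times> nat \<times> nat \<Rightarrow> bool" where
  "trivial_overlap k q = (case q of (i, j, s, t) \<Rightarrow>
     [i = j] (mod k) \<or> [i + j = 0] (mod k) \<or>
     [j = t] (mod k) \<or> [j + t = 0] (mod k) \<or>
     [t = s] (mod k) \<or> [t + s = 0] (mod k) \<or>
     [s = i] (mod k) \<or> [s + i = 0] (mod k))"

text \<open>The set O_phi(F,k) of nontrivial overlaps; the field F is the type of phi.\<close>
definition nontrivial_overlaps :: "'a::field \<Rightarrow> nat \<Rightarrow> (nat \<times> nat \<times> nat \<times> nat) set" where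
  "nontrivial_overlaps phi k = {q. is_overlap phi k q \<and> \<not> trivial_overlap k q}"

end

(* A field homomorphism h : F \<rightarrow> K is injective, so the overlap equations for h phi in K
   hold iff those for phi hold in F. For circularity, rescale so that c = 1; if the line
   \<lambda> \<mapsto> \<lambda> a + b meets h(\<Phi>) in two points, its slope and intercept are computed from
   those points and hence lie in h(F), so the intersection is the h-image of an
   intersection in F, which has at most two elements. *)

theory Submission
  imports Defs
begin

lemma card_affine_inter_scaled:
  fixes a b c :: "'a::field"
  assumes "c \<noteq> 0"
  shows "card ((\<lambda>l. l * a + b) ` Phi \<inter> (\<lambda>l. l * c) ` Phi)
       = card ((\<lambda>l. l * (a / c) + b / c) ` Phi \<inter> Phi)"
proof -
  have "(\<lambda>l. l * a + b) ` Phi \<inter> (\<lambda>l. l * c) ` Phi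
      = (\<lambda>x. x * c) ` ((\<lambda>l. l * (a / c) + b / c) ` Phi \<inter> Phi)"
  proof -
    have "l * a + b = (l * (a / c) + b / c) * c" for l
      using assms by (simp add: field_simps)
    then have "(\<lambda>l. l * a + b) ` Phi = (\<lambda>x. x * c) ` (\<lambda>l. l * (a / c) + b / c) ` Phi"
      by (simp add: image_image)
    then show ?thesis
      using assms by (simp add: image_Int inj_on_def)
  qed
  also have "card \<dots> = card ((\<lambda>l. l * (a / c) + b / c) ` Phi \<inter> Phi)"
    using assms by (intro card_image) (simp add: inj_on_def)
  finally show ?thesis .
qed

lemma circular_iff_unit_scale:
  "circular Phi \<longleftrightarrow>
     (\<forall>a b. a \<noteq> 0 \<longrightarrow> b \<noteq> 0 \<longrightarrow> card ((\<lambda>l. l * a + b) ` Phi \<inter> Phi) \<le> 2)"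
proof
  assume circ: "circular Phi"
  show "\<forall>a b. a \<noteq> 0 \<longrightarrow> b \<noteq> 0 \<longrightarrow> card ((\<lambda>l. l * a + b) ` Phi \<inter> Phi) \<le> 2"
  proof (intro allI impI)
    fix a b :: 'a
    assume "a \<noteq> 0" "b \<noteq> 0"
    from circ[unfolded circular_def, rule_format, OF this one_neq_zero]
    show "card ((\<lambda>l. l * a + b) ` Phi \<inter> Phi) \<le> 2" by simp
  qed
next
  assume unit: "\<forall>a b. a \<noteq> 0 \<longrightarrow> b \<noteq> 0 \<longrightarrow> card ((\<lambda>l. l * a + b) ` Phi \<inter> Phi) \<le> 2"
  show "circular Phi"
    unfolding circular_def
  proof (intro allI impI)
    fix a b c :: 'a
    assume "a \<noteq> 0" "b \<noteq> 0" "c \<noteq> 0"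
    then show "card ((\<lambda>l. l * a + b) ` Phi \<inter> (\<lambda>l. l * c) ` Phi) \<le> 2"
      using unit by (simp only: card_affine_inter_scaled divide_eq_0_iff de_Morgan_disj simp_thms)
  qed
qed

locale field_embedding =
  fixes h :: "'a::field \<Rightarrow> 'b::field"
  assumes hom_1: "h 1 = 1"
    and hom_add: "h (x + y) = h x + h y"
    and hom_mult: "h (x * y) = h x * h y"
begin

lemma hom_0: "h 0 = 0"
  using hom_add[of 0 0] by (metis add.right_neutral add_left_cancel)

lemma hom_diff: "h (x - y) = h x - h y"
  using hom_add[of "x - y" y] by (simp add: algebra_simps)

lemma hom_inverse: "h (inverse x) = inverse (h x)"
proof (cases "x = 0")
  case False
  then have "h x * h (inverse x) = 1"
    using hom_mult[of x "inverse x"] hom_1 by simp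
  then show ?thesis by (metis inverse_unique)
qed (simp add: hom_0)

lemma hom_divide: "h (x / y) = h x / h y"
  by (simp add: divide_inverse hom_mult hom_inverse)

lemma hom_power: "h (x ^ n) = h x ^ n"
  by (induction n) (simp_all add: hom_1 hom_mult)

lemma hom_eq_iff [simp]: "h x = h y \<longleftrightarrow> x = y"
proof
  assume "h x = h y"
  then have "h (x - y) = 0" by (simp add: hom_diff)
  then show "x = y"
    using hom_mult[of "x - y" "inverse (x - y)"] hom_1 by (cases "x = y") auto
qed simp

lemma inj_on_hom: "inj_on h A"
  by (simp add: inj_on_def)

lemma hom_eq_0_iff: "h x = 0 \<longleftrightarrow> x = 0"
  using hom_eq_iff[of x 0] by (simp add: hom_0)

lemma line_through_image_points:
  assumes "h l1 * a + b = h m1" "h l2 * a + b = h m2" "l1 \<noteq> l2"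
  obtains A B where "h A = a" "h B = b"
proof
  define A where "A = (m1 - m2) / (l1 - l2)"
  have "h m1 - h m2 = (h l1 - h l2) * a"
    unfolding assms(1,2)[symmetric] by (simp add: algebra_simps)
  moreover have "h l1 - h l2 \<noteq> 0"
    using assms(3) by (simp add: hom_diff[symmetric] hom_eq_0_iff)
  ultimately show "h A = a"
    unfolding A_def by (simp add: hom_divide hom_diff)
  with assms(1) show "h (m1 - l1 * A) = b"
    by (simp add: hom_diff hom_mult algebra_simps)
qed

lemma image_affine_inter_image:
  assumes "h A = a" "h B = b"
  shows "(\<lambda>l. l * a + b) ` h ` Phi \<inter> h ` Phi = h ` ((\<lambda>l. l * A + B) ` Phi \<inter> Phi)"
proof -
  have "(\<lambda>l. l * a + b) ` h ` Phi = h ` (\<lambda>l. l * A + B) ` Phi"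
    using assms by (simp add: image_image hom_add hom_mult)
  then show ?thesis
    by (simp add: image_Int inj_on_hom)
qed

lemma circular_image:
  assumes "circular Phi"
  shows "circular (h ` Phi)"
  unfolding circular_iff_unit_scale
proof (intro allI impI)
  fix a b :: 'b
  assume "a \<noteq> 0" "b \<noteq> 0"
  let ?T = "(\<lambda>l. l * a + b) ` h ` Phi \<inter> h ` Phi"
  show "card ?T \<le> 2"
  proof (cases "\<exists>A B. h A = a \<and> h B = b")
    case True
    then obtain A B where AB: "h A = a" "h B = b" by blast
    with \<open>a \<noteq> 0\<close> \<open>b \<noteq> 0\<close> have "A \<noteq> 0" "B \<noteq> 0"
      by (auto simp: hom_0)
    have "card ?T = card ((\<lambda>l. l * A + B) ` Phi \<inter> Phi)"
      unfolding image_affine_inter_image[OF AB] by (simp add: card_image inj_on_hom)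
    also have "\<dots> \<le> 2"
      using assms \<open>A \<noteq> 0\<close> \<open>B \<noteq> 0\<close> unfolding circular_iff_unit_scale by blast
    finally show ?thesis .
  next
    case no_preimage: False
    have T_eq: "?T = (\<lambda>l. h l * a + b) ` Phi \<inter> h ` Phi"
      by (simp only: image_image)
    have single: "x = y" if "x \<in> ?T" "y \<in> ?T" for x y
    proof -
      obtain l1 m1 where "l1 \<in> Phi" "x = h l1 * a + b" "x = h m1"
        using \<open>x \<in> ?T\<close> unfolding T_eq by (elim IntE imageE)
      moreover obtain l2 m2 where "l2 \<in> Phi" "y = h l2 * a + b" "y = h m2"
        using \<open>y \<in> ?T\<close> unfolding T_eq by (elim IntE imageE)
      ultimately show "x = y"
      proof (cases "l1 = l2")
        case False
        with \<open>x = h l1 * a + b\<close> \<open>x = h m1\<close> \<open>y = h l2 * a + b\<close> \<open>y = h m2\<close>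
        obtain A B where "h A = a" "h B = b"
          by (metis line_through_image_points)
        with no_preimage show ?thesis by blast
      qed simp
    qed
    have "card ?T \<le> 1"
    proof (cases "?T = {}")
      case False
      then obtain x where "x \<in> ?T" by blast
      with single have "?T = {x}" by blast
      then show ?thesis by simp
    qed simp
    then show ?thesis by simp
  qed
qed

lemma is_overlap_hom_iff: "is_overlap (h phi) k q \<longleftrightarrow> is_overlap phi k q"
proof -
  have hom_factor: "h phi ^ n - 1 = h (phi ^ n - 1)" for n
    by (simp add: hom_diff hom_power hom_1)
  have "h phi ^ w * (h phi ^ j - 1) * (h phi ^ s - 1) = (h phi ^ i - 1) * (h phi ^ t - 1)
     \<longleftrightarrow> phi ^ w * (phi ^ j - 1) * (phi ^ s - 1) = (phi ^ i - 1) * (phi ^ t - 1)" for w j s i t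
  proof -
    have "h phi ^ w * (h phi ^ j - 1) * (h phi ^ s - 1) = h (phi ^ w * (phi ^ j - 1) * (phi ^ s - 1))"
      "(h phi ^ i - 1) * (h phi ^ t - 1) = h ((phi ^ i - 1) * (phi ^ t - 1))"
      by (simp_all only: hom_factor hom_power hom_mult)
    then show ?thesis by simp
  qed
  then show ?thesis
    unfolding is_overlap_def by (simp split: prod.split)
qed

lemma nontrivial_overlaps_hom: "nontrivial_overlaps (h phi) k = nontrivial_overlaps phi k"
  by (simp add: nontrivial_overlaps_def is_overlap_hom_iff)

end

theorem lemma8:
  fixes phi :: "'f::field" and k :: nat and h :: "'f \<Rightarrow> 'k::field"
  assumes "k \<ge> 3"
    and "phi \<noteq> 0"
    and "card (cyc phi) = k"
    and "circular (cyc phi)"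
    and "h 1 = 1"
    and "\<And>x y. h (x + y) = h x + h y"
    and "\<And>x y. h (x * y) = h x * h y"
  shows "circular (h ` cyc phi) \<and> nontrivial_overlaps (h phi) k = nontrivial_overlaps phi k"
proof -
  interpret field_embedding h
    using assms(5-7) by unfold_locales
  show ?thesis
    using circular_image[OF assms(4)] nontrivial_overlaps_hom by blast
qed

end
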